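(* Let $d = 2$ and $\hat X \in U(2)$. Let $F = \int d\psi\, |\langle\psi|\hat X|\psi\rangle|^2$ and $D = \sqrt{\int d\psi\, |\langle\psi|\hat X|\psi\rangle|^4 - F^2}$. Then $$D = \frac{1-F}{\sqrt 5}.$$
   Context: $d\psi$ denotes the unitarily invariant (Haar-induced) probability measure on unit vectors of $\mathbb{C}^2$. *)

theory Defs
  imports "HOL-Analysis.Analysis"
begin

text \<open>Vectors of C^2 are complex^2 (a 4-dimensional real Euclidean space);
  2x2 complex matrices are complex^2^2.\<close>

definition adjoint2 :: "complex^2^2 \<Rightarrow> complex^2^2" where
  "adjoint2 A = (\<chi> i j. cnj (A $ j $ i))"

definition unitary2 :: "complex^2^2 \<Rightarrow> bool" where
  "unitary2 A \<longleftrightarrow> adjoint2 A ** A = mat 1 \<and> A ** adjoint2 A = mat 1"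

definition expval :: "complex^2^2 \<Rightarrow> complex^2 \<Rightarrow> complex" where
  "expval A \<psi> = (\<Sum>i\<in>UNIV. cnj (\<psi> $ i) * (A *v \<psi>) $ i)"

text \<open>The unitarily invariant probability measure on unit vectors of C^2:
  the uniform (normalised surface) measure on the unit sphere, realised as the
  push-forward of the normalised Lebesgue measure on the unit ball of C^2 = R^4
  under radial projection x \<mapsto> x/|x|.\<close>
definition haar_state :: "(complex^2) measure" where
  "haar_state = distr (uniform_measure lborel (ball 0 1)) borel (\<lambda>x. sgn x)"

end

(*
  Haar measure is realised as the radial projection of the uniform measure on the unit ball
  of C^2 = R^4, hence it is invariant under every orthogonal, in particular every unitary, map.

  Let e1, e2 be an orthonormal eigenbasis of X with eigenvalues l1, l2 and c = Re (l1 * cnj l2).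
  In these coordinates a unit vector psi has <psi|X|psi> = l1 a + l2 b with a = |psi_1|^2,
  b = |psi_2|^2, a + b = 1, so |<psi|X|psi>|^2 = 1 - 2 (1 - c) ab.  Hence F and the fourth
  moment are determined by E[ab] = 1/6 and E[(ab)^2] = 1/30, which gives
  D^2 = (1 - c)^2 / 45 = (1 - F)^2 / 5.

  Both moments follow from invariance alone.  The unitary with columns (1, cnj w)/sqrt 2 and
  (-w, 1)/sqrt 2 maps psi to a vector whose coordinates have product
  cnj w (psi_1^2 - w^2 psi_2^2) / 2.  Averaging |psi_1^2 - u psi_2^2|^2 over u = 1, -1 and
  |psi_1^2 - u psi_2^2|^4 over u = 1, -1, i, -i cancels all phase-dependent terms and leaves
  linear equations for E[ab] and E[(ab)^2].
*)

theory Submission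
  imports Defs
begin

section \<open>Lebesgue measure under orthogonal maps\<close>

lemma borel_measurable_linear:
  fixes f :: "'a::euclidean_space \<Rightarrow> 'b::euclidean_space"
  shows "linear f \<Longrightarrow> f \<in> borel_measurable borel"
  by (intro borel_measurable_continuous_onI linear_continuous_on linear_conv_bounded_linear[THEN iffD1])

lemma lborel_distr_isometry_Basis:
  fixes f :: "'a::euclidean_space \<Rightarrow> 'b::euclidean_space"
  assumes lin: "linear f" and inner: "\<And>x y. f x \<bullet> f y = x \<bullet> y" and Basis: "f ` Basis = Basis"
  shows "distr lborel borel f = lborel"
proof (rule lborel_eqI[symmetric])
  have inj: "inj_on f Basis"
    by (metis inj_onI inner inner_commute vector_eq)
  fix l u :: 'b assume le: "\<And>b. b \<in> Basis \<Longrightarrow> l \<bullet> b \<le> u \<bullet> b"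
  define l' where "l' = (\<Sum>b\<in>Basis. (l \<bullet> f b) *\<^sub>R b)"
  define u' where "u' = (\<Sum>b\<in>Basis. (u \<bullet> f b) *\<^sub>R b)"
  have l': "l' \<bullet> b = l \<bullet> f b" and u': "u' \<bullet> b = u \<bullet> f b" if "b \<in> Basis" for b
    unfolding l'_def u'_def using that by (simp_all add: inner_sum_left inner_Basis if_distrib cong: if_cong)
  have "x \<in> f -` box l u \<longleftrightarrow> (\<forall>b\<in>Basis. l \<bullet> f b < f x \<bullet> f b \<and> f x \<bullet> f b < u \<bullet> f b)" for x
    unfolding vimage_eq mem_box by (metis (no_types, lifting) Basis image_iff)
  then have "f -` box l u = box l' u'"
    by (auto simp: mem_box inner l' u')
  then have "emeasure (distr lborel borel f) (box l u) = emeasure lborel (box l' u')"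
    using lin by (simp add: emeasure_distr borel_measurable_linear)
  also have "\<dots> = (\<Prod>b\<in>Basis. (u - l) \<bullet> f b)"
    using le by (subst emeasure_lborel_box) (auto simp: l' u' inner_diff_left image_subset_iff Basis[symmetric])
  also have "\<dots> = (\<Prod>c\<in>Basis. (u - l) \<bullet> c)"
    using prod.reindex[OF inj, of "\<lambda>c. (u - l) \<bullet> c"] Basis by simp
  finally show "emeasure (distr lborel borel f) (box l u) = (\<Prod>b\<in>Basis. (u - l) \<bullet> b)" .
qed simp

lemma lborel_distr_orthogonal_transformation_vec:
  fixes g :: "real^'n::{finite,wellorder} \<Rightarrow> real^'n::{finite,wellorder}"
  assumes g: "orthogonal_transformation g"
  shows "distr lborel borel g = lborel"
proof (rule lborel_eqI[symmetric])
  have meas: "g \<in> borel_measurable borel"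
    using g borel_measurable_linear orthogonal_transformation_linear by blast
  fix l u :: "real^'n::{finite,wellorder}" assume le: "\<And>b. b \<in> Basis \<Longrightarrow> l \<bullet> b \<le> u \<bullet> b"
  have pre: "g -` box l u = inv g ` box l u"
    using orthogonal_transformation_bij[OF g] by (simp add: bij_vimage_eq_inv_image)
  have "g -` box l u \<in> sets lborel"
    using meas by (simp add: measurable_sets_borel)
  then have "emeasure (distr lborel borel g) (box l u) = emeasure lebesgue (inv g ` box l u)"
    using meas by (simp add: emeasure_distr pre[symmetric])
  also have "\<dots> = measure lebesgue (box l u)"
    using orthogonal_transformation_inv[OF g]
    by (simp add: emeasure_eq_measure2 measurable_orthogonal_image measure_orthogonal_image)
  also have "\<dots> = emeasure lborel (box l u)"
    by (simp add: emeasure_eq_measure2)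
  finally show "emeasure (distr lborel borel g) (box l u) = (\<Prod>b\<in>Basis. (u - l) \<bullet> b)"
    using le by simp
qed simp

text \<open>The library proves invariance of Lebesgue measure under orthogonal maps only on
  \<open>real^'n\<close>; these coordinates transport it to \<open>complex^2\<close>.\<close>

definition c2_of_real4 :: "real^4 \<Rightarrow> complex^2" where
  "c2_of_real4 x = vector [Complex (x$1) (x$2), Complex (x$3) (x$4)]"

definition real4_of_c2 :: "complex^2 \<Rightarrow> real^4" where
  "real4_of_c2 z =
    (\<chi> i. if i = 1 then Re (z$1) else if i = 2 then Im (z$1) else if i = 3 then Re (z$2) else Im (z$2))"

lemma c2_of_real4_nth [simp]:
  "c2_of_real4 x $ 1 = Complex (x$1) (x$2)" "c2_of_real4 x $ 2 = Complex (x$3) (x$4)"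
  by (simp_all add: c2_of_real4_def)

lemma real4_of_c2_nth [simp]:
  "real4_of_c2 z $ 1 = Re (z$1)" "real4_of_c2 z $ 2 = Im (z$1)"
  "real4_of_c2 z $ 3 = Re (z$2)" "real4_of_c2 z $ 4 = Im (z$2)"
  by (simp_all add: real4_of_c2_def)

lemma c2_of_real4_inverse [simp]: "c2_of_real4 (real4_of_c2 z) = z"
  by (simp add: vec_eq_iff forall_2 complex_eq_iff)

lemma linear_c2_of_real4: "linear c2_of_real4"
  by (rule linearI) (simp_all add: vec_eq_iff forall_2 complex_eq_iff)

lemma linear_real4_of_c2: "linear real4_of_c2"
  by (rule linearI) (simp_all add: vec_eq_iff forall_4)

lemma inner_c2_of_real4: "c2_of_real4 x \<bullet> c2_of_real4 y = x \<bullet> y"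
  by (simp add: inner_vec_def sum_2 sum_4 inner_complex_def)

lemma inner_real4_of_c2: "real4_of_c2 z \<bullet> real4_of_c2 w = z \<bullet> w"
  by (metis inner_c2_of_real4 c2_of_real4_inverse)

lemma c2_of_real4_Basis: "c2_of_real4 ` Basis = Basis"
proof -
  have C: "(Basis :: (complex^2) set) = {axis 1 1, axis 1 \<i>, axis 2 1, axis 2 \<i>}"
    by (simp add: Basis_vec_def Basis_complex_def UNIV_2; blast)
  have R: "(Basis :: (real^4) set) = {axis 1 1, axis 2 1, axis 3 1, axis 4 1}"
    by (simp add: Basis_vec_def UNIV_4; blast)
  have "c2_of_real4 (axis 1 1) = axis 1 1" "c2_of_real4 (axis 2 1) = axis 1 \<i>"
    "c2_of_real4 (axis 3 1) = axis 2 1" "c2_of_real4 (axis 4 1) = axis 2 \<i>"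
    by (simp_all add: axis_def vec_eq_iff forall_2 complex_eq_iff)
  then show ?thesis
    unfolding C R image_insert image_empty by (simp only:)
qed

lemma lborel_distr_orthogonal_transformation_c2:
  fixes h :: "complex^2 \<Rightarrow> complex^2"
  assumes h: "orthogonal_transformation h"
  shows "distr lborel borel h = lborel"
proof -
  let ?T = c2_of_real4
  define g where "g = real4_of_c2 \<circ> h \<circ> ?T"
  have lin: "linear h"
    using h orthogonal_transformation_linear by blast
  have g: "orthogonal_transformation g"
    using h lin unfolding orthogonal_transformation_def g_def
    by (auto simp: inner_real4_of_c2 inner_c2_of_real4 intro!: linear_compose linear_c2_of_real4 linear_real4_of_c2)
  have lborel_T: "distr lborel borel ?T = lborel"
    by (rule lborel_distr_isometry_Basis[OF linear_c2_of_real4 inner_c2_of_real4 c2_of_real4_Basis])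
  have "h \<circ> ?T = ?T \<circ> g"
    by (simp add: g_def fun_eq_iff)
  then have "distr lborel borel (h \<circ> ?T) = distr lborel borel (?T \<circ> g)"
    by simp
  then have "distr (distr lborel borel ?T) borel h = distr (distr lborel borel g) borel ?T"
    using g lin by (simp add: distr_distr borel_measurable_linear linear_c2_of_real4 orthogonal_transformation_linear)
  then show ?thesis
    by (simp add: lborel_T lborel_distr_orthogonal_transformation_vec[OF g])
qed

lemma distr_uniform_measure_lborel_invariant:
  fixes h :: "'a::euclidean_space \<Rightarrow> 'a"
  assumes meas: "h \<in> borel_measurable borel" and inv: "distr lborel borel h = lborel"
    and A: "A \<in> sets borel" "h -` A = A"
  shows "distr (uniform_measure lborel A) borel h = uniform_measure lborel A"
proof (rule measure_eqI)
  fix B assume "B \<in> sets (distr (uniform_measure lborel A) borel h)"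
  then have B: "B \<in> sets borel"
    by simp
  have "A \<inter> h -` B = h -` (A \<inter> B)"
    using A by auto
  then have "emeasure lborel (A \<inter> h -` B) = emeasure (distr lborel borel h) (A \<inter> B)"
    using meas A B by (simp add: emeasure_distr)
  then show "emeasure (distr (uniform_measure lborel A) borel h) B = emeasure (uniform_measure lborel A) B"
    using meas A B by (simp add: emeasure_distr measurable_sets_borel inv)
qed simp

section \<open>The Haar state\<close>

lemma sets_haar_state [simp, measurable_cong]: "sets haar_state = sets borel"
  by (simp add: haar_state_def)

lemma space_haar_state [simp]: "space haar_state = UNIV"
  by (simp add: haar_state_def)

lemma measurable_haar_state_iff [simp]: "f \<in> measurable haar_state N \<longleftrightarrow> f \<in> measurable borel N"
  using measurable_cong_sets[of haar_state borel N N] by simp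

lemma haar_state_distr_orthogonal_transformation:
  assumes h: "orthogonal_transformation h"
  shows "distr haar_state borel h = haar_state"
proof -
  have meas: "h \<in> borel_measurable borel"
    using h borel_measurable_linear orthogonal_transformation_linear by blast
  have "h -` ball 0 1 = ball 0 1"
    using h by (auto simp: orthogonal_transformation_norm)
  then have ball: "distr (uniform_measure lborel (ball 0 1)) borel h = uniform_measure lborel (ball 0 1)"
    by (simp add: distr_uniform_measure_lborel_invariant meas lborel_distr_orthogonal_transformation_c2[OF h])
  have "h \<circ> sgn = sgn \<circ> h"
    using h by (simp add: fun_eq_iff sgn_div_norm orthogonal_transformation_scaleR orthogonal_transformation_norm)
  then have "distr (distr (uniform_measure lborel (ball 0 1)) borel sgn) borel h
      = distr (distr (uniform_measure lborel (ball 0 1)) borel h) borel sgn"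
    using meas by (simp add: distr_distr)
  then show ?thesis
    unfolding haar_state_def ball .
qed

lemma integral_haar_state_orthogonal_transformation:
  fixes f :: "complex^2 \<Rightarrow> real"
  assumes h: "orthogonal_transformation h" and f: "f \<in> borel_measurable borel"
  shows "(\<integral>\<psi>. f (h \<psi>) \<partial>haar_state) = (\<integral>\<psi>. f \<psi> \<partial>haar_state)"
proof -
  have "h \<in> borel_measurable borel"
    using h borel_measurable_linear orthogonal_transformation_linear by blast
  then have "(\<integral>\<psi>. f (h \<psi>) \<partial>haar_state) = integral\<^sup>L (distr haar_state borel h) f"
    using f by (simp add: integral_distr)
  then show ?thesis
    by (simp add: haar_state_distr_orthogonal_transformation[OF h])
qed

lemma emeasure_haar_state_UNIV: "emeasure haar_state UNIV = 1"
proof -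
  have "emeasure lborel (ball (0::complex^2) 1) \<noteq> 0" "emeasure lborel (ball (0::complex^2) 1) < \<infinity>"
    using unit_ball_vol_pos[of 4] by (simp_all add: emeasure_ball emeasure_lborel_ball_finite less_imp_neq[symmetric])
  then show ?thesis
    by (simp add: haar_state_def emeasure_distr)
qed

lemma finite_measure_haar_state: "finite_measure haar_state"
  by (rule finite_measureI) (simp add: emeasure_haar_state_UNIV)

lemma measure_haar_state_UNIV [simp]: "measure haar_state UNIV = 1"
  using emeasure_haar_state_UNIV by (simp add: measure_def)

lemma integrable_haar_state_const [simp]: "integrable haar_state (\<lambda>_. c::real)"
  by (rule finite_measure.integrable_const[OF finite_measure_haar_state])

lemma AE_haar_state_norm: "AE \<psi> in haar_state. norm \<psi> = 1"
proof -
  have "AE x in lborel. x \<noteq> (0::complex^2)"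
    by (rule AE_lborel_singleton)
  then have "AE x in uniform_measure lborel (ball (0::complex^2) 1). norm (sgn x) = 1"
    by (intro AE_uniform_measureI) (auto elim!: eventually_mono simp: norm_sgn)
  then show ?thesis
    unfolding haar_state_def by (subst AE_distr_iff) simp_all
qed

lemma integrable_haar_state_continuous:
  fixes f :: "complex^2 \<Rightarrow> real"
  assumes f: "continuous_on UNIV f"
  shows "integrable haar_state f"
proof -
  have "compact (f ` cball 0 1)"
    by (rule compact_continuous_image) (auto intro: continuous_on_subset[OF f])
  then obtain B where B: "\<And>x. x \<in> cball 0 1 \<Longrightarrow> norm (f x) \<le> B"
    using compact_imp_bounded bounded_iff by (metis image_eqI)
  have "AE \<psi> in haar_state. norm (f \<psi>) \<le> B"
    using AE_haar_state_norm by eventually_elim (metis B mem_cball_0 order_refl)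
  moreover have "f \<in> borel_measurable haar_state"
    using f by (simp add: borel_measurable_continuous_onI)
  ultimately show ?thesis
    by (rule finite_measure.integrable_const_bound[OF finite_measure_haar_state])
qed

lemma norm_vec2_power2: "(norm (x::complex^2))^2 = (cmod (x$1))^2 + (cmod (x$2))^2"
  by (simp add: norm_vec_def L2_set_def sum_2)

lemma integral_haar_state_cong_sphere:
  fixes f g :: "complex^2 \<Rightarrow> real"
  assumes "\<And>\<psi>. (cmod (\<psi>$1))^2 + (cmod (\<psi>$2))^2 = 1 \<Longrightarrow> f \<psi> = g \<psi>"
    and "continuous_on UNIV f" "continuous_on UNIV g"
  shows "(\<integral>\<psi>. f \<psi> \<partial>haar_state) = (\<integral>\<psi>. g \<psi> \<partial>haar_state)"
proof (rule integral_cong_AE)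
  show "AE \<psi> in haar_state. f \<psi> = g \<psi>"
    using AE_haar_state_norm by eventually_elim (metis assms(1) norm_vec2_power2 power_one)
qed (use assms(2,3) in \<open>simp_all add: borel_measurable_continuous_onI\<close>)

section \<open>Diagonalising unitary 2x2 matrices\<close>

lemma cmod_eq_1_iff: "cmod z = 1 \<longleftrightarrow> cnj z * z = 1"
proof -
  have "cnj z * z = complex_of_real ((cmod z)^2)"
    by (metis complex_norm_square mult.commute)
  then show ?thesis
    by (simp only: of_real_eq_1_iff abs_square_eq_1 abs_norm_cancel)
qed

definition cinner2 :: "complex^2 \<Rightarrow> complex^2 \<Rightarrow> complex" where
  "cinner2 x y = (\<Sum>i\<in>UNIV. cnj (x$i) * y$i)"

lemma cinner2_expand: "cinner2 x y = cnj (x$1) * y$1 + cnj (x$2) * y$2"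
  by (simp add: cinner2_def sum_2)

lemma expval_cinner2: "expval A \<psi> = cinner2 \<psi> (A *v \<psi>)"
  by (simp add: expval_def cinner2_def)

lemma cinner2_self: "cinner2 x x = complex_of_real ((norm x)^2)"
  unfolding cinner2_expand norm_vec2_power2 of_real_add complex_norm_square by (simp add: mult.commute)

lemma cinner2_self_eq_1_iff: "cinner2 x x = 1 \<longleftrightarrow> norm x = 1"
  unfolding cinner2_self of_real_eq_1_iff abs_square_eq_1 by simp

lemma cinner2_add_left: "cinner2 (x + y) z = cinner2 x z + cinner2 y z"
  and cinner2_add_right: "cinner2 x (y + z) = cinner2 x y + cinner2 x z"
  and cinner2_scale_left: "cinner2 (c *s x) y = cnj c * cinner2 x y"
  and cinner2_scale_right: "cinner2 x (c *s y) = c * cinner2 x y"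
  by (simp_all add: cinner2_expand algebra_simps)

lemma cinner2_adjoint2: "cinner2 (A *v x) y = cinner2 x (adjoint2 A *v y)"
  by (simp add: cinner2_expand adjoint2_def matrix_vector_mult_def sum_2 algebra_simps)

lemma unitary2_cinner2:
  assumes "unitary2 U"
  shows "cinner2 (U *v x) (U *v y) = cinner2 x y"
  using assms by (simp add: cinner2_adjoint2 matrix_vector_mul_assoc unitary2_def)

definition perp2 :: "complex^2 \<Rightarrow> complex^2" where
  "perp2 p = vector [- cnj (p$2), cnj (p$1)]"

lemma perp2_nth [simp]: "perp2 p $ 1 = - cnj (p$2)" "perp2 p $ 2 = cnj (p$1)"
  by (simp_all add: perp2_def)

lemma cinner2_perp2: "cinner2 p (perp2 p) = 0" "cinner2 (perp2 p) p = 0"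
  by (simp_all add: cinner2_expand algebra_simps)

lemma cinner2_perp2_perp2: "cinner2 (perp2 p) (perp2 p) = cinner2 p p"
  by (simp add: cinner2_expand algebra_simps)

lemma cinner2_orthonormal_expansion:
  assumes "cinner2 p p = 1"
  shows "v = cinner2 p v *s p + cinner2 (perp2 p) v *s perp2 p"
proof -
  have "\<forall>i. cinner2 p v * p$i + cinner2 (perp2 p) v * perp2 p $ i = cinner2 p p * v$i"
    by (simp add: forall_2 cinner2_expand algebra_simps)
  then show ?thesis
    using assms by (simp add: vec_eq_iff)
qed

definition su2 :: "complex^2 \<Rightarrow> complex^2 \<Rightarrow> complex^2" where
  "su2 p \<psi> = \<psi>$1 *s p + \<psi>$2 *s perp2 p"

lemma su2_nth [simp]:
  "su2 p \<psi> $ 1 = \<psi>$1 * p$1 - \<psi>$2 * cnj (p$2)" "su2 p \<psi> $ 2 = \<psi>$1 * p$2 + \<psi>$2 * cnj (p$1)"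
  by (simp_all add: su2_def)

lemma linear_su2: "linear (su2 p)"
  by (rule linearI) (simp_all add: vec_eq_iff forall_2 algebra_simps scaleR_conv_of_real[where 'a=complex])

lemma continuous_on_su2: "continuous_on S (su2 p)"
  by (intro linear_continuous_on linear_conv_bounded_linear[THEN iffD1] linear_su2)

lemma orthogonal_transformation_su2:
  assumes "norm p = 1"
  shows "orthogonal_transformation (su2 p)"
  unfolding orthogonal_transformation
proof
  show "linear (su2 p)"
    by (rule linear_su2)
  have "(norm (su2 p \<psi>))^2 = (norm \<psi>)^2 * (norm p)^2" for \<psi>
    unfolding norm_vec2_power2 su2_nth by (simp only: cmod_power2) (simp add: power2_eq_square algebra_simps)
  then show "\<forall>\<psi>. norm (su2 p \<psi>) = norm \<psi>"
    using assms by simp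
qed

lemma matrix2_eigenvector_exists:
  fixes A :: "complex^2^2"
  obtains l v where "v \<noteq> 0" "A *v v = l *s v"
proof (cases "A$1$2 = 0")
  case True
  then have "A *v axis 2 1 = A$2$2 *s axis 2 1"
    by (simp add: vec_eq_iff forall_2 matrix_vector_mult_def sum_2 axis_def)
  then show ?thesis
    using that by (metis axis_eq_0_iff zero_neq_one)
next
  case False
  define tr where "tr = A$1$1 + A$2$2"
  define dt where "dt = A$1$1 * A$2$2 - A$1$2 * A$2$1"
  define r where "r = csqrt (tr^2 - 4 * dt)"
  define l where "l = (tr + r) / 2"
  have "4 * (l^2 - tr * l + dt) = r^2 - (tr^2 - 4 * dt)"
    by (simp add: l_def field_simps power2_eq_square)
  also have "\<dots> = 0"
    by (simp add: r_def)
  finally have "l^2 - tr * l + dt = 0"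
    by (simp only: mult_eq_0_iff) simp
  then have "A *v vector [A$1$2, l - A$1$1] = l *s vector [A$1$2, l - A$1$1]"
    by (simp add: vec_eq_iff forall_2 matrix_vector_mult_def sum_2 tr_def dt_def algebra_simps power2_eq_square)
  moreover have "vector [A$1$2, l - A$1$1] \<noteq> (0::complex^2)"
    using False by (metis vector_2(1) zero_index)
  ultimately show ?thesis
    using that by blast
qed

lemma unitary2_eigenvalue_norm:
  assumes "unitary2 U" "U *v v = l *s v" "cinner2 v v = 1"
  shows "cmod l = 1"
proof -
  have "cnj l * l = cinner2 (U *v v) (U *v v)"
    using assms(2,3) by (simp add: cinner2_scale_left cinner2_scale_right)
  also have "\<dots> = 1"
    using assms(1,3) by (simp add: unitary2_cinner2)
  finally show ?thesis
    by (simp add: cmod_eq_1_iff)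
qed

lemma unitary2_eigenbasis:
  assumes U: "unitary2 U"
  obtains p l1 l2 where "norm p = 1" "cmod l1 = 1" "cmod l2 = 1"
    "U *v p = l1 *s p" "U *v perp2 p = l2 *s perp2 p"
proof -
  obtain l1 v where "v \<noteq> 0" and eig: "U *v v = l1 *s v"
    by (rule matrix2_eigenvector_exists)
  define p where "p = (1 / of_real (norm v)) *s v"
  define q where "q = perp2 p"
  have "cinner2 p p = cinner2 v v / (of_real (norm v))^2"
    by (simp add: p_def cinner2_scale_left cinner2_scale_right power2_eq_square)
  then have p: "cinner2 p p = 1"
    using \<open>v \<noteq> 0\<close> by (simp add: cinner2_self)
  have Up: "U *v p = l1 *s p"
    by (simp add: p_def vector_scalar_commute eig mult.commute)
  have l1: "cmod l1 = 1"
    by (rule unitary2_eigenvalue_norm[OF U Up p])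
  have "cnj l1 * cinner2 p (U *v q) = cinner2 (U *v p) (U *v q)"
    by (simp add: Up cinner2_scale_left)
  also have "\<dots> = 0"
    by (simp add: unitary2_cinner2[OF U] q_def cinner2_perp2)
  finally have "cinner2 p (U *v q) = 0"
    using l1 by auto
  then have Uq: "U *v q = cinner2 q (U *v q) *s q"
    using cinner2_orthonormal_expansion[OF p, of "U *v q"] by (simp add: q_def)
  have "cinner2 q q = 1"
    using p by (simp add: q_def cinner2_perp2_perp2)
  then have "cmod (cinner2 q (U *v q)) = 1"
    by (rule unitary2_eigenvalue_norm[OF U Uq])
  then show ?thesis
    using that p l1 Up Uq by (simp add: q_def cinner2_self_eq_1_iff)
qed

lemma expval_su2_eigenbasis:
  assumes p: "cinner2 p p = 1" and "A *v p = l1 *s p" "A *v perp2 p = l2 *s perp2 p"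
  shows "expval A (su2 p \<psi>) = l1 * of_real ((cmod (\<psi>$1))^2) + l2 * of_real ((cmod (\<psi>$2))^2)"
proof -
  have "A *v su2 p \<psi> = (\<psi>$1 * l1) *s p + (\<psi>$2 * l2) *s perp2 p"
    using assms by (simp add: su2_def matrix_vector_right_distrib vector_scalar_commute)
  then show ?thesis
    using p by (simp add: expval_cinner2 su2_def cinner2_add_left cinner2_add_right cinner2_scale_left
        cinner2_scale_right cinner2_perp2 cinner2_perp2_perp2 complex_norm_square flip: of_real_power)
qed

section \<open>Moments of the Haar state\<close>

definition balanced2 :: "complex \<Rightarrow> complex^2" where
  "balanced2 w = (1 / complex_of_real (sqrt 2)) *s vector [1, cnj w]"

lemma norm_balanced2:
  assumes "cmod w = 1"
  shows "norm (balanced2 w) = 1"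
proof -
  have "(norm (balanced2 w))^2 = 1"
    using assms by (simp add: balanced2_def norm_vec2_power2 norm_mult norm_divide power_divide)
  then show ?thesis
    by (simp add: abs_square_eq_1)
qed

lemma cmod_su2_balanced2_product:
  assumes "cmod w = 1"
  shows "cmod (su2 (balanced2 w) \<psi> $ 1 * su2 (balanced2 w) \<psi> $ 2) = cmod (\<psi>$1^2 - w^2 * \<psi>$2^2) / 2"
proof -
  let ?x = "\<psi>$1" and ?y = "\<psi>$2"
  have "(complex_of_real (sqrt 2))^2 = 2"
    by (simp flip: of_real_power)
  then have "su2 (balanced2 w) \<psi> $ 1 * su2 (balanced2 w) \<psi> $ 2 = (?x - ?y * w) * (?x * cnj w + ?y) / 2"
    by (simp add: balanced2_def field_simps power2_eq_square)
  also have "(?x - ?y * w) * (?x * cnj w + ?y) = cnj w * (?x^2 - w^2 * ?y^2) + (1 - w * cnj w) * (?x * ?y - w * ?y^2)"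
    by (simp add: algebra_simps power2_eq_square)
  also have "w * cnj w = 1"
    using assms(1) cmod_eq_1_iff by (simp add: mult.commute)
  finally have "su2 (balanced2 w) \<psi> $ 1 * su2 (balanced2 w) \<psi> $ 2 = cnj w * (?x^2 - w^2 * ?y^2) / 2"
    by simp
  then show ?thesis
    using assms(1) by (simp only: norm_mult norm_divide complex_mod_cnj) simp
qed

lemma integral_haar_state_balanced:
  fixes f :: "real \<Rightarrow> real"
  assumes u: "cmod u = 1" and f: "continuous_on UNIV f"
  shows "(\<integral>\<psi>. f (cmod (\<psi>$1^2 - u * \<psi>$2^2) / 2) \<partial>haar_state) = (\<integral>\<psi>. f (cmod (\<psi>$1 * \<psi>$2)) \<partial>haar_state)"
proof -
  define w where "w = csqrt u"
  have w: "cmod w = 1" "w^2 = u"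
    using u by (simp_all add: w_def)
  have "continuous_on UNIV (\<lambda>\<psi>::complex^2. f (cmod (\<psi>$1 * \<psi>$2)))"
    by (intro continuous_on_compose2[OF f] continuous_intros) auto
  then have "(\<integral>\<psi>. f (cmod (su2 (balanced2 w) \<psi> $ 1 * su2 (balanced2 w) \<psi> $ 2)) \<partial>haar_state)
      = (\<integral>\<psi>. f (cmod (\<psi>$1 * \<psi>$2)) \<partial>haar_state)"
    using w by (intro integral_haar_state_orthogonal_transformation orthogonal_transformation_su2
        borel_measurable_continuous_onI norm_balanced2)
  then show ?thesis
    by (simp only: cmod_su2_balanced2_product[OF w(1)] w(2))
qed

lemma integral_haar_state_balanced_sum:
  fixes f :: "real \<Rightarrow> real"
  assumes U: "finite U" "\<forall>u\<in>U. cmod u = 1" and f: "continuous_on UNIV f"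
  shows "(\<integral>\<psi>. (\<Sum>u\<in>U. f (cmod (\<psi>$1^2 - u * \<psi>$2^2) / 2)) \<partial>haar_state)
    = card U * (\<integral>\<psi>. f (cmod (\<psi>$1 * \<psi>$2)) \<partial>haar_state)"
proof -
  have "integrable haar_state (\<lambda>\<psi>. f (cmod (\<psi>$1^2 - u * \<psi>$2^2) / 2))" for u
    by (intro integrable_haar_state_continuous continuous_on_compose2[OF f] continuous_intros) auto
  then show ?thesis
    using U f by (simp add: integral_sum integral_haar_state_balanced)
qed

lemma cmod_parallelogram: "cmod (a - b)^2 + cmod (a + b)^2 = 2 * (cmod a^2 + cmod b^2)"
  by (simp only: cmod_power2) (simp add: power2_eq_square algebra_simps)

lemma cmod_parallelogram_pow4:
  "cmod (a - b)^4 + cmod (a + b)^4 + cmod (a - \<i> * b)^4 + cmod (a + \<i> * b)^4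
    = 4 * (cmod a^2 + cmod b^2)^2 + 8 * cmod a^2 * cmod b^2"
proof -
  have "cmod z ^ 4 = (cmod z ^ 2)^2" for z
    by simp
  then show ?thesis
    by (simp only: cmod_power2) (simp add: power2_eq_square algebra_simps)
qed

lemma balanced_sum_sq_sphere:
  assumes "(cmod x)^2 + (cmod y)^2 = 1"
  shows "(\<Sum>u\<in>{1,-1}. (cmod (x^2 - u * y^2) / 2)^2) = 1/2 - cmod (x * y)^2"
proof -
  have "(\<Sum>u\<in>{1,-1}. (cmod (x^2 - u * y^2) / 2)^2) = (cmod (x^2 - y^2)^2 + cmod (x^2 + y^2)^2) / 4"
    by (simp add: power_divide add_divide_distrib)
  also have "\<dots> = (((cmod x)^2)^2 + ((cmod y)^2)^2) / 2"
    by (simp add: cmod_parallelogram norm_power)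
  also have "\<dots> = 1/2 - cmod (x * y)^2"
  proof -
    have "cmod (x * y)^2 = (cmod x)^2 * (cmod y)^2" "(cmod y)^2 = 1 - (cmod x)^2"
      using assms by (simp_all add: norm_mult power_mult_distrib)
    then show ?thesis
      by (simp only:) (simp add: power2_eq_square field_simps)
  qed
  finally show ?thesis .
qed

lemma balanced_sum_pow4_sphere:
  assumes "(cmod x)^2 + (cmod y)^2 = 1"
  shows "(\<Sum>u\<in>{1,-1,\<i>,-\<i>}. (cmod (x^2 - u * y^2) / 2)^4) = 1/4 - cmod (x * y)^2 + 3/2 * cmod (x * y)^4"
proof -
  have "(\<Sum>u\<in>{1,-1,\<i>,-\<i>}. (cmod (x^2 - u * y^2) / 2)^4)
      = (cmod (x^2 - y^2)^4 + cmod (x^2 + y^2)^4 + cmod (x^2 - \<i> * y^2)^4 + cmod (x^2 + \<i> * y^2)^4) / 16"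
    by (simp add: complex_eq_iff power_divide add_divide_distrib)
  also have "\<dots> = (4 * (((cmod x)^2)^2 + ((cmod y)^2)^2)^2 + 8 * ((cmod x)^2)^2 * ((cmod y)^2)^2) / 16"
    by (simp add: cmod_parallelogram_pow4 norm_power)
  also have "\<dots> = 1/4 - cmod (x * y)^2 + 3/2 * cmod (x * y)^4"
  proof -
    have "cmod (x * y)^4 = ((cmod x)^2 * (cmod y)^2)^2" "cmod (x * y)^2 = (cmod x)^2 * (cmod y)^2"
      by (simp_all add: norm_mult power_mult_distrib flip: power_mult)
    moreover have "(cmod y)^2 = 1 - (cmod x)^2"
      using assms by simp
    ultimately show ?thesis
      by (simp only:) (simp add: power2_eq_square field_simps)
  qed
  finally show ?thesis .
qed

lemma integral_haar_state_product_sq: "(\<integral>\<psi>. cmod (\<psi>$1 * \<psi>$2)^2 \<partial>haar_state) = 1/6"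
proof -
  let ?m = "\<integral>\<psi>. cmod (\<psi>$1 * \<psi>$2)^2 \<partial>haar_state"
  have int: "integrable haar_state (\<lambda>\<psi>. cmod (\<psi>$1 * \<psi>$2)^2)"
    by (intro integrable_haar_state_continuous continuous_intros)
  have "2 * ?m = (\<integral>\<psi>. (\<Sum>u\<in>{1,-1}. (cmod (\<psi>$1^2 - u * \<psi>$2^2) / 2)^2) \<partial>haar_state)"
    using integral_haar_state_balanced_sum[of "{1,-1}" "\<lambda>t. t^2"] by (simp add: continuous_on_power)
  also have "\<dots> = (\<integral>\<psi>. 1/2 - cmod (\<psi>$1 * \<psi>$2)^2 \<partial>haar_state)"
    by (intro integral_haar_state_cong_sphere balanced_sum_sq_sphere continuous_intros) simp_all
  also have "\<dots> = 1/2 - ?m"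
    using int by simp
  finally show ?thesis
    by simp
qed

lemma integral_haar_state_product_pow4: "(\<integral>\<psi>. cmod (\<psi>$1 * \<psi>$2)^4 \<partial>haar_state) = 1/30"
proof -
  let ?m = "\<integral>\<psi>. cmod (\<psi>$1 * \<psi>$2)^4 \<partial>haar_state"
  have int: "integrable haar_state (\<lambda>\<psi>. cmod (\<psi>$1 * \<psi>$2)^2)"
    "integrable haar_state (\<lambda>\<psi>. cmod (\<psi>$1 * \<psi>$2)^4)"
    by (intro integrable_haar_state_continuous continuous_intros)+
  have "card {1, -1, \<i>, -\<i>} = 4"
    by (simp add: complex_eq_iff)
  then have "4 * ?m = (\<integral>\<psi>. (\<Sum>u\<in>{1,-1,\<i>,-\<i>}. (cmod (\<psi>$1^2 - u * \<psi>$2^2) / 2)^4) \<partial>haar_state)"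
    using integral_haar_state_balanced_sum[of "{1,-1,\<i>,-\<i>}" "\<lambda>t. t^4"] by (simp add: continuous_on_power)
  also have "\<dots> = (\<integral>\<psi>. 1/4 - cmod (\<psi>$1 * \<psi>$2)^2 + 3/2 * cmod (\<psi>$1 * \<psi>$2)^4 \<partial>haar_state)"
    by (intro integral_haar_state_cong_sphere balanced_sum_pow4_sphere continuous_intros) simp_all
  also have "\<dots> = 1/4 - 1/6 + 3/2 * ?m"
    using int by (simp add: integral_haar_state_product_sq)
  finally show ?thesis
    by simp
qed

section \<open>Expectation values of a unitary\<close>

lemma continuous_on_expval [continuous_intros]:
  "continuous_on S f \<Longrightarrow> continuous_on S (\<lambda>x. expval A (f x))"
  unfolding expval_def matrix_vector_mult_def vec_lambda_beta by (intro continuous_intros)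

lemma cmod_unit_combination_sq:
  assumes "cmod l1 = 1" "cmod l2 = 1"
  shows "(cmod (l1 * of_real s + l2 * of_real t))^2 = s^2 + t^2 + 2 * Re (l1 * cnj l2) * s * t"
proof -
  have "Re l1 ^ 2 + Im l1 ^ 2 = 1" "Re l2 ^ 2 + Im l2 ^ 2 = 1"
    using assms by (simp_all flip: cmod_power2)
  moreover have "(cmod (l1 * of_real s + l2 * of_real t))^2
      = (Re l1 ^ 2 + Im l1 ^ 2) * s^2 + (Re l2 ^ 2 + Im l2 ^ 2) * t^2 + 2 * (Re l1 * Re l2 + Im l1 * Im l2) * s * t"
    by (simp only: cmod_power2) (simp add: power2_eq_square algebra_simps)
  ultimately show ?thesis
    by simp
qed

lemma unitary2_cmod_expval_sq_sphere:
  assumes "unitary2 U"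
  obtains p c where "norm p = 1" "c \<le> 1"
    "\<And>\<psi>. (cmod (\<psi>$1))^2 + (cmod (\<psi>$2))^2 = 1 \<Longrightarrow>
      (cmod (expval U (su2 p \<psi>)))^2 = 1 - 2 * (1 - c) * cmod (\<psi>$1 * \<psi>$2)^2"
proof -
  obtain p l1 l2 where p: "norm p = 1" and l: "cmod l1 = 1" "cmod l2 = 1"
    and eig: "U *v p = l1 *s p" "U *v perp2 p = l2 *s perp2 p"
    using unitary2_eigenbasis[OF assms] by blast
  define c where "c = Re (l1 * cnj l2)"
  have "c \<le> cmod (l1 * cnj l2)"
    unfolding c_def by (rule complex_Re_le_cmod)
  then have "c \<le> 1"
    using l by (simp add: norm_mult)
  moreover have "(cmod (expval U (su2 p \<psi>)))^2 = 1 - 2 * (1 - c) * cmod (\<psi>$1 * \<psi>$2)^2"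
    if "(cmod (\<psi>$1))^2 + (cmod (\<psi>$2))^2 = 1" for \<psi>
  proof -
    define a where "a = (cmod (\<psi>$1))^2"
    have b: "(cmod (\<psi>$2))^2 = 1 - a"
      using that by (simp add: a_def)
    have "expval U (su2 p \<psi>) = l1 * of_real a + l2 * of_real ((cmod (\<psi>$2))^2)"
      unfolding a_def using p eig by (intro expval_su2_eigenbasis) (simp_all add: cinner2_self_eq_1_iff)
    then have "(cmod (expval U (su2 p \<psi>)))^2 = a^2 + (1 - a)^2 + 2 * c * a * (1 - a)"
      unfolding b c_def by (simp only: cmod_unit_combination_sq[OF l])
    also have "\<dots> = 1 - 2 * (1 - c) * (a * (1 - a))"
      by (simp add: power2_eq_square algebra_simps)
    also have "a * (1 - a) = cmod (\<psi>$1 * \<psi>$2)^2"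
      unfolding b[symmetric] by (simp add: a_def norm_mult power_mult_distrib)
    finally show ?thesis .
  qed
  ultimately show ?thesis
    using that p by blast
qed

lemma unitary2_expval_moments:
  assumes "unitary2 U"
  obtains c where "c \<le> 1"
    "(\<integral>\<psi>. (cmod (expval U \<psi>))^2 \<partial>haar_state) = 1 - (1 - c) / 3"
    "(\<integral>\<psi>. (cmod (expval U \<psi>))^4 \<partial>haar_state) = 1 - 2 * (1 - c) / 3 + 2 * (1 - c)^2 / 15"
proof -
  obtain p c where p: "norm p = 1" and "c \<le> 1"
    and sq: "\<And>\<psi>. (cmod (\<psi>$1))^2 + (cmod (\<psi>$2))^2 = 1 \<Longrightarrow>
      (cmod (expval U (su2 p \<psi>)))^2 = 1 - 2 * (1 - c) * cmod (\<psi>$1 * \<psi>$2)^2"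
    using unitary2_cmod_expval_sq_sphere[OF assms] by blast
  have reduce: "(\<integral>\<psi>. g ((cmod (expval U \<psi>))^2) \<partial>haar_state)
      = (\<integral>\<psi>. g (1 - 2 * (1 - c) * cmod (\<psi>$1 * \<psi>$2)^2) \<partial>haar_state)"
    if g: "continuous_on UNIV g" for g :: "real \<Rightarrow> real"
  proof -
    have "(\<integral>\<psi>. g ((cmod (expval U \<psi>))^2) \<partial>haar_state)
        = (\<integral>\<psi>. g ((cmod (expval U (su2 p \<psi>)))^2) \<partial>haar_state)"
      by (intro integral_haar_state_orthogonal_transformation[symmetric] orthogonal_transformation_su2[OF p]
          borel_measurable_continuous_onI continuous_on_compose2[OF g] continuous_intros) auto
    also have "\<dots> = (\<integral>\<psi>. g (1 - 2 * (1 - c) * cmod (\<psi>$1 * \<psi>$2)^2) \<partial>haar_state)"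
      by (intro integral_haar_state_cong_sphere continuous_on_compose2[OF g] continuous_intros)
        (simp_all add: sq continuous_on_su2)
    finally show ?thesis .
  qed
  have int: "integrable haar_state (\<lambda>\<psi>. cmod (\<psi>$1 * \<psi>$2)^2)"
    "integrable haar_state (\<lambda>\<psi>. cmod (\<psi>$1 * \<psi>$2)^4)"
    by (intro integrable_haar_state_continuous continuous_intros)+
  have "(\<integral>\<psi>. (cmod (expval U \<psi>))^2 \<partial>haar_state) = (\<integral>\<psi>. 1 - 2 * (1 - c) * cmod (\<psi>$1 * \<psi>$2)^2 \<partial>haar_state)"
    using reduce[of "\<lambda>t. t"] by simp
  also have "\<dots> = 1 - (1 - c) / 3"
    using int by (simp add: integral_haar_state_product_sq)
  finally have F: "(\<integral>\<psi>. (cmod (expval U \<psi>))^2 \<partial>haar_state) = 1 - (1 - c) / 3" .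
  have "(\<integral>\<psi>. (cmod (expval U \<psi>))^4 \<partial>haar_state) = (\<integral>\<psi>. (1 - 2 * (1 - c) * cmod (\<psi>$1 * \<psi>$2)^2)^2 \<partial>haar_state)"
    using reduce[of "\<lambda>t. t^2"] by (simp add: continuous_on_power flip: power_mult)
  also have "\<dots> = (\<integral>\<psi>. 1 - 4 * (1 - c) * cmod (\<psi>$1 * \<psi>$2)^2
      + 4 * (1 - c)^2 * cmod (\<psi>$1 * \<psi>$2)^4 \<partial>haar_state)"
    by (rule Bochner_Integration.integral_cong) (simp_all add: power2_eq_square power4_eq_xxxx algebra_simps)
  also have "\<dots> = 1 - 2 * (1 - c) / 3 + 2 * (1 - c)^2 / 15"
    using int by (simp add: integral_haar_state_product_sq integral_haar_state_product_pow4)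
  finally show ?thesis
    using that \<open>c \<le> 1\<close> F by blast
qed

theorem proposition9:
  fixes X :: "complex^2^2"
  assumes "unitary2 X"
  shows "let F = (\<integral>\<psi>. (cmod (expval X \<psi>))^2 \<partial>haar_state);
             D = sqrt ((\<integral>\<psi>. (cmod (expval X \<psi>))^4 \<partial>haar_state) - F^2)
         in D = (1 - F) / sqrt 5"
proof -
  obtain c where "c \<le> 1"
    and F: "(\<integral>\<psi>. (cmod (expval X \<psi>))^2 \<partial>haar_state) = 1 - (1 - c) / 3"
    and M: "(\<integral>\<psi>. (cmod (expval X \<psi>))^4 \<partial>haar_state) = 1 - 2 * (1 - c) / 3 + 2 * (1 - c)^2 / 15"
    using unitary2_expval_moments[OF assms] by blast
  have var: "1 - 2 * (1 - c) / 3 + 2 * (1 - c)^2 / 15 - (1 - (1 - c) / 3)^2 = ((1 - c) / 3)^2 / 5"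
    by (simp add: power2_eq_square field_simps)
  show ?thesis
    unfolding Let_def F M var real_sqrt_divide real_sqrt_abs using \<open>c \<le> 1\<close> by simp
qed

end
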